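(* For each $n$, let $W\in\mathbb{R}^{n\times n}$ be a random symmetric matrix with zero diagonal whose entries $W_{ij}$, $i<j$, are independent Rademacher random variables (uniform on $\{-1,+1\}$), and let $T=-\frac{\sqrt{n}}{4}\mathrm{Id}_{n\times n}+W$. Then, with probability tending to $1$ as $n\to\infty$, one has $\pi_+(T)\geq \frac{1}{3}$.
   Context: For a self-adjoint matrix $T\in\mathbb{C}^{n\times n}$, $$\pi_+(T):=\sup\left\{\operatorname{Tr}(TA):A\in\mathbb{C}^{n\times n},\ A\succeq 0,\ \|A\|_1=1\right\},$$ where $A\succeq0$ means positive semidefinite and $\|A\|_1=\sum_{i,j}|A_{ij}|$ is the entrywise $1$-norm. *)

theory Defs
  imports Complex_Main "HOL-Library.FuncSet"
begin

text \<open>Square n x n complex matrices are represented as functions nat => nat => complex;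
  only the entries with indices below n matter.\<close>

definition psd :: "nat \<Rightarrow> (nat \<Rightarrow> nat \<Rightarrow> complex) \<Rightarrow> bool" where
  "psd n A \<longleftrightarrow>
     (\<forall>i<n. \<forall>j<n. A j i = cnj (A i j)) \<and>
     (\<forall>v :: nat \<Rightarrow> complex. 0 \<le> Re (\<Sum>i<n. \<Sum>j<n. cnj (v i) * A i j * v j))"

definition entry_norm1 :: "nat \<Rightarrow> (nat \<Rightarrow> nat \<Rightarrow> complex) \<Rightarrow> real" where
  "entry_norm1 n A = (\<Sum>i<n. \<Sum>j<n. cmod (A i j))"

definition mtrace_prod :: "nat \<Rightarrow> (nat \<Rightarrow> nat \<Rightarrow> complex) \<Rightarrow> (nat \<Rightarrow> nat \<Rightarrow> complex) \<Rightarrow> complex" where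
  "mtrace_prod n T A = (\<Sum>i<n. \<Sum>j<n. T i j * A j i)"

text \<open>pi_plus; for self-adjoint T and PSD A the trace Tr(TA) is real, so taking Re is harmless.\<close>
definition pi_plus :: "nat \<Rightarrow> (nat \<Rightarrow> nat \<Rightarrow> complex) \<Rightarrow> real" where
  "pi_plus n T = Sup {Re (mtrace_prod n T A) | A. psd n A \<and> entry_norm1 n A = 1}"

definition upper_pairs :: "nat \<Rightarrow> (nat \<times> nat) set" where
  "upper_pairs n = {(i, j). i < j \<and> j < n}"

definition sign_patterns :: "nat \<Rightarrow> (nat \<times> nat \<Rightarrow> real) set" where
  "sign_patterns n = PiE (upper_pairs n) (\<lambda>_. {-1, 1})"

definition W_mat :: "(nat \<times> nat \<Rightarrow> real) \<Rightarrow> nat \<Rightarrow> nat \<Rightarrow> real" where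
  "W_mat s i j = (if i < j then s (i, j) else if j < i then s (j, i) else 0)"

definition T_mat :: "nat \<Rightarrow> (nat \<times> nat \<Rightarrow> real) \<Rightarrow> nat \<Rightarrow> nat \<Rightarrow> complex" where
  "T_mat n s i j = complex_of_real ((if i = j then - sqrt (real n) / 4 else 0) + W_mat s i j)"

end

(*
  The test matrix is A = (sqrt n Id + W)^2, positive semidefinite as a Gram matrix. Its trace
  against T is (3/2) n^(5/2) + tr W^3 + O(n^(3/2)), while its entrywise 1-norm is
  2 n^(5/2) + O(n^2) plus the off-diagonal part of W^2; by AM-GM the latter is at most
  (n^3 + sum of the squared off-diagonal entries of W^2) / (2 sqrt n), and that sum of squares
  is at most n^3 plus the signed count of 4-cycles of W. So pi_plus(T) >= 1/3 as soon as
  tr W^3 >= -n^(5/2)/4 and the 4-cycle count is at most n^3/4.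

  Both tr W^3 and the 4-cycle count are sums of products of W along cycles through distinct
  vertices. Two such products are uncorrelated unless the vertices of one lie among those of
  the other: flipping the sign of an edge of one cycle at a vertex missed by the other negates
  their product. This gives second moments O(n^3) and O(n^4), and Chebyshev's inequality bounds the
  proportion of bad sign patterns by O(1/n^2).
*)
theory Submission
  imports Defs
begin

lemma sum_lists_length_0: "(\<Sum>xs\<in>{xs. set xs \<subseteq> A \<and> length xs = 0}. f xs) = f []"
proof -
  have "{xs. set xs \<subseteq> A \<and> length xs = 0} = {[]}"
    by auto
  then show ?thesis by simp
qed

lemma sum_lists_length_Suc:
  assumes "finite A"
  shows "(\<Sum>xs\<in>{xs. set xs \<subseteq> A \<and> length xs = Suc k}. f xs)
    = (\<Sum>a\<in>A. \<Sum>xs\<in>{xs. set xs \<subseteq> A \<and> length xs = k}. f (a # xs))"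
proof -
  have "(\<Sum>xs\<in>{xs. set xs \<subseteq> A \<and> length xs = Suc k}. f xs)
      = (\<Sum>(xs, a)\<in>{xs. set xs \<subseteq> A \<and> length xs = k} \<times> A. f (a # xs))"
    unfolding lists_length_Suc_eq by (subst sum.reindex) (auto simp: inj_on_def intro!: sum.cong)
  also have "\<dots> = (\<Sum>xs\<in>{xs. set xs \<subseteq> A \<and> length xs = k}. \<Sum>a\<in>A. f (a # xs))"
    by (rule sum.cartesian_product[symmetric])
  finally show ?thesis by (simp add: sum.swap[of _ A])
qed

lemma Suc_mod_less: "m < k \<Longrightarrow> Suc m mod k < k"
  by (metis mod_less_divisor not_less_zero gr0I)

lemma Suc_mod_neq: "2 \<le> k \<Longrightarrow> m < k \<Longrightarrow> Suc m mod k \<noteq> m"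
  by (cases "Suc m = k") auto

lemma Suc_Suc_mod_neq: "3 \<le> k \<Longrightarrow> m < k \<Longrightarrow> Suc (Suc m mod k) mod k \<noteq> m"
  by (cases "Suc m = k"; cases "Suc (Suc m) = k") (auto simp: mod_Suc)

lemma sum_square_sum_le_sparse_correlation:
  fixes f :: "'s \<Rightarrow> 'i \<Rightarrow> real"
  assumes "finite S" "finite X"
    and bounded: "\<And>s t. s \<in> S \<Longrightarrow> t \<in> X \<Longrightarrow> \<bar>f s t\<bar> \<le> 1"
    and uncorrelated: "\<And>t u. t \<in> X \<Longrightarrow> u \<in> X \<Longrightarrow> u \<notin> R t \<Longrightarrow> (\<Sum>s\<in>S. f s t * f s u) = 0"
    and sparse: "\<And>t. t \<in> X \<Longrightarrow> card (X \<inter> R t) \<le> K"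
  shows "(\<Sum>s\<in>S. (\<Sum>t\<in>X. f s t)\<^sup>2) \<le> real K * real (card X) * real (card S)"
proof -
  have "(\<Sum>s\<in>S. (\<Sum>t\<in>X. f s t)\<^sup>2) = (\<Sum>t\<in>X. \<Sum>u\<in>X. \<Sum>s\<in>S. f s t * f s u)"
    by (simp add: power2_eq_square sum_product sum.swap[of _ S])
  also have "\<dots> = (\<Sum>t\<in>X. \<Sum>u\<in>X \<inter> R t. \<Sum>s\<in>S. f s t * f s u)"
    by (intro sum.cong refl sum.mono_neutral_right) (auto simp: assms(2) uncorrelated)
  also have "\<dots> \<le> (\<Sum>t\<in>X. \<Sum>u\<in>X \<inter> R t. real (card S))"
  proof (intro sum_mono)
    fix t u assume "t \<in> X" "u \<in> X \<inter> R t"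
    then have "f s t * f s u \<le> 1" if "s \<in> S" for s
      using bounded[OF that] by (metis IntE abs_le_D1 abs_mult mult_le_one abs_ge_zero)
    then show "(\<Sum>s\<in>S. f s t * f s u) \<le> real (card S)"
      using sum_mono[of S "\<lambda>s. f s t * f s u" "\<lambda>_. 1"] by simp
  qed
  also have "\<dots> \<le> (\<Sum>t\<in>X. real K * real (card S))"
    by (intro sum_mono) (simp add: sparse mult_right_mono)
  finally show ?thesis by (simp add: mult_ac)
qed

lemma card_abs_ge_mult_square_le:
  fixes f :: "'s \<Rightarrow> real"
  assumes "finite S" "0 \<le> a"
  shows "real (card {s \<in> S. a \<le> \<bar>f s\<bar>}) * a\<^sup>2 \<le> (\<Sum>s\<in>S. (f s)\<^sup>2)"
proof -
  have "real (card {s \<in> S. a \<le> \<bar>f s\<bar>}) * a\<^sup>2 = (\<Sum>s\<in>{s \<in> S. a \<le> \<bar>f s\<bar>}. a\<^sup>2)"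
    by simp
  also have "\<dots> \<le> (\<Sum>s\<in>{s \<in> S. a \<le> \<bar>f s\<bar>}. (f s)\<^sup>2)"
    using assms(2) by (intro sum_mono) (metis mem_Collect_eq power2_abs power_mono)
  also have "\<dots> \<le> (\<Sum>s\<in>S. (f s)\<^sup>2)"
    by (rule sum_mono2) (use assms(1) in auto)
  finally show ?thesis .
qed

lemma psd_gram: "psd n (\<lambda>i j. \<Sum>k<n. cnj (B k i) * B k j)"
  unfolding psd_def
proof (intro conjI allI impI)
  fix i j
  show "(\<Sum>k<n. cnj (B k j) * B k i) = cnj (\<Sum>k<n. cnj (B k i) * B k j)"
    by (simp add: mult.commute)
next
  fix v :: "nat \<Rightarrow> complex"
  define u where "u k = (\<Sum>j<n. B k j * v j)" for k
  have "(\<Sum>i<n. \<Sum>j<n. cnj (v i) * (\<Sum>k<n. cnj (B k i) * B k j) * v j)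
      = (\<Sum>i<n. \<Sum>j<n. \<Sum>k<n. cnj (B k i * v i) * (B k j * v j))"
    by (simp add: sum_distrib_left sum_distrib_right mult_ac)
  also have "\<dots> = (\<Sum>i<n. \<Sum>k<n. \<Sum>j<n. cnj (B k i * v i) * (B k j * v j))"
    by (rule sum.cong[OF refl sum.swap])
  also have "\<dots> = (\<Sum>k<n. \<Sum>i<n. \<Sum>j<n. cnj (B k i * v i) * (B k j * v j))"
    by (rule sum.swap)
  also have "\<dots> = (\<Sum>k<n. cnj (u k) * u k)"
    unfolding u_def cnj_sum sum_product ..
  finally show "0 \<le> Re (\<Sum>i<n. \<Sum>j<n. cnj (v i) * (\<Sum>k<n. cnj (B k i) * B k j) * v j)"
    by (simp add: Re_sum sum_nonneg)
qed

lemma psd_scale: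
  assumes "psd n A" "0 \<le> c"
  shows "psd n (\<lambda>i j. complex_of_real c * A i j)"
  unfolding psd_def
proof (intro conjI allI impI)
  fix i j assume "i < n" "j < n"
  then have "A j i = cnj (A i j)"
    using assms(1) unfolding psd_def by blast
  then show "complex_of_real c * A j i = cnj (complex_of_real c * A i j)"
    by simp
next
  fix v :: "nat \<Rightarrow> complex"
  have "0 \<le> Re (\<Sum>i<n. \<Sum>j<n. cnj (v i) * A i j * v j)"
    using assms(1) unfolding psd_def by blast
  moreover have "(\<Sum>i<n. \<Sum>j<n. cnj (v i) * (complex_of_real c * A i j) * v j)
      = complex_of_real c * (\<Sum>i<n. \<Sum>j<n. cnj (v i) * A i j * v j)"
    by (simp add: sum_distrib_left mult_ac)
  ultimately show "0 \<le> Re (\<Sum>i<n. \<Sum>j<n. cnj (v i) * (complex_of_real c * A i j) * v j)"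
    using assms(2) by simp
qed

lemma bdd_above_pi_plus:
  "bdd_above {Re (mtrace_prod n T A) | A. psd n A \<and> entry_norm1 n A = 1}"
proof (rule bdd_aboveI[of _ "\<Sum>i<n. \<Sum>j<n. cmod (T i j)"], clarify)
  fix A assume "entry_norm1 n A = 1"
  then have le1: "cmod (A j i) \<le> 1" if "i < n" "j < n" for i j
    using that member_le_sum[of j "{..<n}" "\<lambda>j. \<Sum>i<n. cmod (A j i)"]
      member_le_sum[of i "{..<n}" "\<lambda>i. cmod (A j i)"]
    by (fastforce simp: entry_norm1_def sum_nonneg)
  have "Re (mtrace_prod n T A) \<le> (\<Sum>i<n. \<Sum>j<n. cmod (T i j * A j i))"
    unfolding mtrace_prod_def
    by (rule order_trans[OF complex_Re_le_cmod order_trans[OF norm_sum sum_mono[OF norm_sum]]])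
  also have "\<dots> \<le> (\<Sum>i<n. \<Sum>j<n. cmod (T i j))"
    by (intro sum_mono) (auto simp: norm_mult intro: mult_left_le le1)
  finally show "Re (mtrace_prod n T A) \<le> (\<Sum>i<n. \<Sum>j<n. cmod (T i j))" .
qed

lemma pi_plus_ge_normalized_witness:
  assumes "psd n A" "0 < entry_norm1 n A"
  shows "Re (mtrace_prod n T A) / entry_norm1 n A \<le> pi_plus n T"
proof -
  define c where "c = 1 / entry_norm1 n A"
  define B where "B i j = complex_of_real c * A i j" for i j
  have c: "0 < c"
    using assms(2) by (simp add: c_def)
  have "psd n B"
    unfolding B_def by (rule psd_scale[OF assms(1)]) (use c in simp)
  moreover have "entry_norm1 n B = 1"
  proof -
    have "entry_norm1 n B = c * entry_norm1 n A"
      using c by (simp add: B_def entry_norm1_def norm_mult sum_distrib_left)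
    then show ?thesis
      using assms(2) by (simp add: c_def)
  qed
  moreover have "Re (mtrace_prod n T B) = Re (mtrace_prod n T A) / entry_norm1 n A"
    by (simp add: B_def c_def mtrace_prod_def sum_distrib_left[symmetric] mult.left_commute[of _ "T _ _"]
        Re_sum sum_divide_distrib)
  ultimately show ?thesis
    unfolding pi_plus_def by (intro cSup_upper bdd_above_pi_plus) force
qed

lemma W_mat_sym: "W_mat s i j = W_mat s j i"
  unfolding W_mat_def by auto

lemma W_mat_diag [simp]: "W_mat s i i = 0"
  unfolding W_mat_def by auto

lemma W_mat_square:
  assumes "s \<in> sign_patterns n" "i < n" "j < n" "i \<noteq> j"
  shows "(W_mat s i j)\<^sup>2 = 1"
proof -
  have "s (min i j, max i j) \<in> {-1, 1}"
    using assms by (auto simp: sign_patterns_def upper_pairs_def PiE_def Pi_def min_def max_def)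
  then show ?thesis
    using assms(4) by (cases "i < j") (auto simp: W_mat_def min_def max_def)
qed

lemma abs_W_mat_le_1:
  assumes "s \<in> sign_patterns n" "i < n" "j < n"
  shows "\<bar>W_mat s i j\<bar> \<le> 1"
  using W_mat_square[OF assms] by (cases "i = j") (auto simp: abs_square_eq_1)

lemma finite_sign_patterns: "finite (sign_patterns n)"
  unfolding sign_patterns_def upper_pairs_def
  by (rule finite_PiE) (auto intro: finite_subset[of _ "{..<n} \<times> {..<n}"])

lemma card_sign_patterns_pos: "0 < card (sign_patterns n)"
  using finite_sign_patterns by (simp add: card_gt_0_iff sign_patterns_def PiE_eq_empty_iff)

definition flip_sign :: "nat \<Rightarrow> nat \<Rightarrow> (nat \<times> nat \<Rightarrow> real) \<Rightarrow> nat \<times> nat \<Rightarrow> real" where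
  "flip_sign a b s = s((min a b, max a b) := - s (min a b, max a b))"

lemma W_mat_flip_sign:
  "W_mat (flip_sign a b s) c d = (if {c, d} = {a, b} \<and> c \<noteq> d then - W_mat s c d else W_mat s c d)"
  unfolding W_mat_def flip_sign_def
  by (cases "c < d"; cases "d < c") (auto simp: doubleton_eq_iff min_def max_def)

lemma flip_sign_flip_sign [simp]: "flip_sign a b (flip_sign a b s) = s"
  unfolding flip_sign_def by auto

lemma flip_sign_in_sign_patterns:
  assumes "s \<in> sign_patterns n" "a \<noteq> b" "a < n" "b < n"
  shows "flip_sign a b s \<in> sign_patterns n"
proof -
  have "(min a b, max a b) \<in> upper_pairs n"
    using assms by (auto simp: upper_pairs_def min_def max_def)
  then show ?thesis
    using assms(1) unfolding sign_patterns_def flip_sign_def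
    by (auto simp: PiE_def Pi_def extensional_def)
qed

lemma sum_sign_patterns_eq_0_if_odd:
  fixes g :: "(nat \<times> nat \<Rightarrow> real) \<Rightarrow> real"
  assumes "a \<noteq> b" "a < n" "b < n" and odd: "\<And>s. g (flip_sign a b s) = - g s"
  shows "(\<Sum>s\<in>sign_patterns n. g s) = 0"
proof -
  have "(\<Sum>s\<in>sign_patterns n. g s) = (\<Sum>s\<in>sign_patterns n. g (flip_sign a b s))"
    by (rule sum.reindex_bij_witness[of _ "flip_sign a b" "flip_sign a b"])
      (auto intro!: flip_sign_in_sign_patterns simp: assms)
  also have "\<dots> = - (\<Sum>s\<in>sign_patterns n. g s)"
    by (simp add: odd sum_negf)
  finally show ?thesis by simp
qed

definition cycle_weight :: "(nat \<times> nat \<Rightarrow> real) \<Rightarrow> nat list \<Rightarrow> real" where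
  "cycle_weight s xs = (\<Prod>m<length xs. W_mat s (xs ! m) (xs ! (Suc m mod length xs)))"

definition cycles :: "nat \<Rightarrow> nat \<Rightarrow> nat list set" where
  "cycles n k = {xs. set xs \<subseteq> {..<n} \<and> length xs = k \<and> distinct xs}"

definition cycle_sum :: "nat \<Rightarrow> nat \<Rightarrow> (nat \<times> nat \<Rightarrow> real) \<Rightarrow> real" where
  "cycle_sum n k s = (\<Sum>xs\<in>cycles n k. cycle_weight s xs)"

lemma abs_cycle_weight_le_1:
  assumes "s \<in> sign_patterns n" "set xs \<subseteq> {..<n}"
  shows "\<bar>cycle_weight s xs\<bar> \<le> 1"
  unfolding cycle_weight_def abs_prod
  by (intro prod_le_1) (use assms in \<open>auto intro!: abs_W_mat_le_1 nth_mem Suc_mod_less\<close>)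

lemma cycle_edge_eq_imp_eq:
  assumes "distinct xs" "3 \<le> length xs" "m < length xs" "p < length xs"
    and "{xs ! m, xs ! (Suc m mod length xs)} = {xs ! p, xs ! (Suc p mod length xs)}"
  shows "m = p"
proof -
  let ?k = "length xs"
  have "Suc m mod ?k < ?k" "Suc p mod ?k < ?k"
    using assms(3,4) by (auto intro: Suc_mod_less)
  then consider "m = p" | "m = Suc p mod ?k" "Suc m mod ?k = p"
    using assms by (auto simp: doubleton_eq_iff nth_eq_iff_index_eq)
  then show ?thesis
    by cases (use Suc_Suc_mod_neq[OF assms(2,4)] in auto)
qed

lemma cycle_weight_flip_sign_notin:
  assumes "a \<notin> set xs"
  shows "cycle_weight (flip_sign a b s) xs = cycle_weight s xs"
  unfolding cycle_weight_def
  by (rule prod.cong)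
    (use assms in \<open>auto simp: W_mat_flip_sign doubleton_eq_iff intro: nth_mem Suc_mod_less\<close>)

lemma cycle_weight_flip_sign_edge:
  assumes "distinct xs" "3 \<le> length xs" "p < length xs"
  shows "cycle_weight (flip_sign (xs ! p) (xs ! (Suc p mod length xs)) s) xs = - cycle_weight s xs"
proof -
  let ?k = "length xs"
  define g where "g m = W_mat s (xs ! m) (xs ! (Suc m mod ?k))" for m
  have "W_mat (flip_sign (xs ! p) (xs ! (Suc p mod ?k)) s) (xs ! m) (xs ! (Suc m mod ?k))
      = (if m = p then - g m else g m)" if "m < ?k" for m
  proof -
    have "xs ! m \<noteq> xs ! (Suc m mod ?k)"
      using assms(1,2) that Suc_mod_less[OF that] Suc_mod_neq[of ?k m]
      by (simp add: nth_eq_iff_index_eq)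
    then show ?thesis
      using cycle_edge_eq_imp_eq[OF assms(1,2) that assms(3)]
      by (auto simp: W_mat_flip_sign g_def)
  qed
  then have "cycle_weight (flip_sign (xs ! p) (xs ! (Suc p mod ?k)) s) xs
      = (\<Prod>m<?k. if m = p then - g m else g m)"
    unfolding cycle_weight_def by (intro prod.cong) auto
  also have "\<dots> = - (\<Prod>m<?k. g m)"
    using assms(3) by (simp add: prod.remove[of "{..<?k}" p] prod.If_cases Diff_eq[symmetric])
  finally show ?thesis by (simp add: cycle_weight_def g_def)
qed

lemma sum_cycle_weight_mult_eq_0:
  assumes "t \<in> cycles n k" "u \<in> cycles n k" "3 \<le> k" "\<not> set u \<subseteq> set t"
  shows "(\<Sum>s\<in>sign_patterns n. cycle_weight s t * cycle_weight s u) = 0"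
proof -
  have u: "distinct u" "length u = k" "set u \<subseteq> {..<n}"
    using assms(2) by (auto simp: cycles_def)
  obtain a where "a \<in> set u" "a \<notin> set t"
    using assms(4) by blast
  then obtain p where p: "p < k" "u ! p \<notin> set t"
    using u(2) by (auto simp: in_set_conv_nth)
  have q: "Suc p mod k < k" "Suc p mod k \<noteq> p"
    using assms(3) p(1) Suc_mod_less[OF p(1)] Suc_mod_neq[of k p] by auto
  show ?thesis
  proof (rule sum_sign_patterns_eq_0_if_odd)
    show "u ! p \<noteq> u ! (Suc p mod k)"
      using u p q by (simp add: nth_eq_iff_index_eq)
    show "u ! p < n" "u ! (Suc p mod k) < n"
      using u p q nth_mem by blast+
    show "cycle_weight (flip_sign (u ! p) (u ! (Suc p mod k)) s) t
        * cycle_weight (flip_sign (u ! p) (u ! (Suc p mod k)) s) u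
        = - (cycle_weight s t * cycle_weight s u)" for s
      using cycle_weight_flip_sign_notin[OF p(2)] cycle_weight_flip_sign_edge[of u p s] u p assms(3)
      by simp
  qed
qed

lemma cycles_subset_lists: "cycles n k \<subseteq> {xs. set xs \<subseteq> {..<n} \<and> length xs = k}"
  by (auto simp: cycles_def)

lemma finite_cycles: "finite (cycles n k)"
  using finite_subset[OF cycles_subset_lists finite_lists_length_eq] by simp

lemma cycle_sum_second_moment:
  assumes "3 \<le> k"
  shows "(\<Sum>s\<in>sign_patterns n. (cycle_sum n k s)\<^sup>2)
    \<le> real k ^ k * real n ^ k * real (card (sign_patterns n))"
proof -
  have sparse: "card (cycles n k \<inter> {u. set u \<subseteq> set t}) \<le> k ^ k" if "t \<in> cycles n k" for t
  proof -
    have "card (cycles n k \<inter> {u. set u \<subseteq> set t}) \<le> card {u. set u \<subseteq> set t \<and> length u = k}"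
      by (intro card_mono finite_lists_length_eq) (auto simp: cycles_def)
    also have "\<dots> = k ^ k"
      using that by (simp add: card_lists_length_eq distinct_card cycles_def)
    finally show ?thesis .
  qed
  have "(\<Sum>s\<in>sign_patterns n. (cycle_sum n k s)\<^sup>2)
      \<le> real (k ^ k) * real (card (cycles n k)) * real (card (sign_patterns n))"
    unfolding cycle_sum_def
  proof (rule sum_square_sum_le_sparse_correlation[OF finite_sign_patterns finite_cycles _ _ sparse])
    show "\<bar>cycle_weight s t\<bar> \<le> 1" if "s \<in> sign_patterns n" "t \<in> cycles n k" for s t
      using that by (intro abs_cycle_weight_le_1) (auto simp: cycles_def)
    show "(\<Sum>s\<in>sign_patterns n. cycle_weight s t * cycle_weight s u) = 0"
      if "t \<in> cycles n k" "u \<in> cycles n k" "u \<notin> {u. set u \<subseteq> set t}" for t u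
      using that assms by (intro sum_cycle_weight_mult_eq_0) auto
  qed
  also have "\<dots> \<le> real k ^ k * real n ^ k * real (card (sign_patterns n))"
  proof -
    have "card (cycles n k) \<le> n ^ k"
      using card_mono[OF finite_lists_length_eq cycles_subset_lists] by (simp add: card_lists_length_eq)
    then have "real (card (cycles n k)) \<le> real n ^ k"
      by (metis of_nat_le_iff of_nat_power)
    from mult_left_mono[OF this, of "real k ^ k"] show ?thesis
      by (intro mult_right_mono) auto
  qed
  finally show ?thesis .
qed

lemma card_abs_cycle_sum_ge_le:
  assumes "3 \<le> k" "0 < a"
  shows "real (card {s \<in> sign_patterns n. a \<le> \<bar>cycle_sum n k s\<bar>})
    \<le> real k ^ k * real n ^ k / a\<^sup>2 * real (card (sign_patterns n))"
proof -
  have "real (card {s \<in> sign_patterns n. a \<le> \<bar>cycle_sum n k s\<bar>}) * a\<^sup>2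
      \<le> real k ^ k * real n ^ k * real (card (sign_patterns n))"
    using card_abs_ge_mult_square_le[OF finite_sign_patterns[of n], where a = a and f = "cycle_sum n k"]
      cycle_sum_second_moment[OF assms(1), of n] assms(2)
    by simp
  then show ?thesis
    using assms(2) by (simp add: field_simps)
qed

lemma cycle_sum_eq_sum_lists:
  "cycle_sum n k s
    = (\<Sum>xs\<in>{xs. set xs \<subseteq> {..<n} \<and> length xs = k}. if distinct xs then cycle_weight s xs else 0)"
proof -
  have "cycles n k = {xs \<in> {xs. set xs \<subseteq> {..<n} \<and> length xs = k}. distinct xs}"
    by (auto simp: cycles_def)
  then show ?thesis
    unfolding cycle_sum_def by (simp only: sum.inter_filter finite_lists_length_eq finite_lessThan)
qed

lemma cycle_sum_3:
  "cycle_sum n 3 s = (\<Sum>i<n. \<Sum>j<n. \<Sum>k<n. W_mat s i j * W_mat s j k * W_mat s k i)"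
  unfolding cycle_sum_eq_sum_lists numeral_3_eq_3 sum_lists_length_Suc[OF finite_lessThan] sum_lists_length_0
  by (intro sum.cong refl) (auto simp: cycle_weight_def lessThan_Suc mult_ac)

lemma cycle_sum_4:
  "cycle_sum n 4 s = (\<Sum>i<n. \<Sum>j<n. \<Sum>k<n. \<Sum>l<n.
     if i \<noteq> k \<and> j \<noteq> l then W_mat s i j * W_mat s j k * W_mat s k l * W_mat s l i else 0)"
proof -
  have four: "(4::nat) = Suc (Suc (Suc (Suc 0)))"
    by simp
  show ?thesis
    unfolding cycle_sum_eq_sum_lists four sum_lists_length_Suc[OF finite_lessThan] sum_lists_length_0
    by (intro sum.cong refl) (auto simp: cycle_weight_def lessThan_Suc mult_ac)
qed

definition W_square :: "nat \<Rightarrow> (nat \<times> nat \<Rightarrow> real) \<Rightarrow> nat \<Rightarrow> nat \<Rightarrow> real" where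
  "W_square n s i j = (\<Sum>k<n. W_mat s i k * W_mat s k j)"

lemma W_square_diag:
  assumes "s \<in> sign_patterns n" "i < n"
  shows "W_square n s i i = real n - 1"
proof -
  have "W_square n s i i = (\<Sum>k\<in>{..<n} - {i}. 1)"
    unfolding W_square_def using assms
    by (intro sum.mono_neutral_cong_right) (auto simp: W_mat_sym[of s k i for k] W_mat_square simp flip: power2_eq_square)
  then show ?thesis
    using assms(2) by simp
qed

definition shifted_W :: "nat \<Rightarrow> (nat \<times> nat \<Rightarrow> real) \<Rightarrow> nat \<Rightarrow> nat \<Rightarrow> real" where
  "shifted_W n s i j = (if i = j then sqrt (real n) else 0) + W_mat s i j"

lemma shifted_W_sym: "shifted_W n s i j = shifted_W n s j i"
  unfolding shifted_W_def by (simp add: W_mat_sym[of s i j])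

definition witness_mat :: "nat \<Rightarrow> (nat \<times> nat \<Rightarrow> real) \<Rightarrow> nat \<Rightarrow> nat \<Rightarrow> real" where
  "witness_mat n s i j = (\<Sum>k<n. shifted_W n s i k * shifted_W n s k j)"

lemma witness_mat_eq:
  assumes "i < n" "j < n"
  shows "witness_mat n s i j
    = (if i = j then real n else 0) + 2 * sqrt (real n) * W_mat s i j + W_square n s i j"
proof -
  have "shifted_W n s i k * shifted_W n s k j
      = (if k = i then sqrt (real n) * shifted_W n s k j else 0)
        + (if k = j then sqrt (real n) * W_mat s i k else 0) + W_mat s i k * W_mat s k j" for k
    unfolding shifted_W_def by (auto simp: algebra_simps)
  then show ?thesis
    using assms unfolding witness_mat_def W_square_def
    by (simp add: sum.distrib shifted_W_def W_mat_sym[of s j i] algebra_simps)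
qed

lemma witness_mat_diag:
  assumes "s \<in> sign_patterns n" "i < n"
  shows "witness_mat n s i i = 2 * real n - 1"
  using assms by (simp add: witness_mat_eq W_square_diag)

lemma psd_witness_mat: "psd n (\<lambda>i j. complex_of_real (witness_mat n s i j))"
proof -
  have "complex_of_real (witness_mat n s i j)
      = (\<Sum>k<n. cnj (complex_of_real (shifted_W n s k i)) * complex_of_real (shifted_W n s k j))" for i j
    unfolding witness_mat_def by (simp add: shifted_W_sym[of n s _ i])
  then show ?thesis
    using psd_gram[of n "\<lambda>k i. complex_of_real (shifted_W n s k i)"] by presburger
qed

lemma trace_T_mat_witness_mat:
  assumes "s \<in> sign_patterns n"
  shows "Re (mtrace_prod n (T_mat n s) (\<lambda>i j. complex_of_real (witness_mat n s i j)))
    = - sqrt (real n) / 4 * (real n * (2 * real n - 1)) + 2 * sqrt (real n) * (real n * (real n - 1))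
      + cycle_sum n 3 s"
proof -
  let ?r = "sqrt (real n)" and ?A = "witness_mat n s"
  have "Re (mtrace_prod n (T_mat n s) (\<lambda>i j. complex_of_real (?A i j)))
      = (\<Sum>i<n. \<Sum>j<n. ((if i = j then - ?r / 4 else 0) + W_mat s i j) * ?A j i)"
    unfolding mtrace_prod_def T_mat_def by (simp add: Re_sum)
  also have "\<dots> = - ?r / 4 * (\<Sum>i<n. ?A i i) + (\<Sum>i<n. \<Sum>j<n. W_mat s i j * ?A j i)"
  proof -
    have "((if i = j then c else 0) + w) * x = (if i = j then c * x else 0) + w * x"
      for i j :: nat and c w x :: real
      by (simp add: distrib_right)
    then show ?thesis
      by (simp add: sum.distrib sum_distrib_left sum_subtractf sum_negf)
  qed
  also have "(\<Sum>i<n. \<Sum>j<n. W_mat s i j * ?A j i)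
      = (\<Sum>i<n. \<Sum>j<n. 2 * ?r * (W_mat s i j * W_mat s j i) + W_mat s i j * W_square n s j i)"
    by (intro sum.cong refl) (auto simp: witness_mat_eq algebra_simps)
  also have "(\<Sum>i<n. ?A i i) = real n * (2 * real n - 1)"
    using assms by (simp add: witness_mat_diag)
  also have "(\<Sum>i<n. \<Sum>j<n. 2 * ?r * (W_mat s i j * W_mat s j i) + W_mat s i j * W_square n s j i)
      = 2 * ?r * (\<Sum>i<n. W_square n s i i) + cycle_sum n 3 s"
    by (simp add: sum.distrib sum_distrib_left cycle_sum_3 W_square_def mult_ac)
  also have "(\<Sum>i<n. W_square n s i i) = real n * (real n - 1)"
    using assms by (simp add: W_square_diag)
  finally show ?thesis
    by linarith
qed

lemma entry_norm1_witness_mat_le: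
  assumes "s \<in> sign_patterns n"
  shows "entry_norm1 n (\<lambda>i j. complex_of_real (witness_mat n s i j))
    \<le> real n * (2 * real n - 1) + 2 * sqrt (real n) * real n ^ 2
      + (\<Sum>i<n. \<Sum>j<n. if i = j then 0 else \<bar>W_square n s i j\<bar>)"
proof -
  have "\<bar>witness_mat n s i j\<bar>
      \<le> (if i = j then 2 * real n - 1 else 0) + 2 * sqrt (real n) + (if i = j then 0 else \<bar>W_square n s i j\<bar>)"
    if "i < n" "j < n" for i j
  proof (cases "i = j")
    case True
    then show ?thesis
      using assms that by (simp add: witness_mat_diag)
  next
    case False
    have "\<bar>2 * sqrt (real n) * W_mat s i j\<bar> \<le> 2 * sqrt (real n)"
      using abs_W_mat_le_1[OF assms that] by (simp add: abs_mult mult_left_le)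
    then show ?thesis
      using False that by (simp add: witness_mat_eq)
  qed
  then have "entry_norm1 n (\<lambda>i j. complex_of_real (witness_mat n s i j))
      \<le> (\<Sum>i<n. \<Sum>j<n. (if i = j then 2 * real n - 1 else 0) + 2 * sqrt (real n)
           + (if i = j then 0 else \<bar>W_square n s i j\<bar>))"
    unfolding entry_norm1_def by (intro sum_mono) simp
  also have "\<dots> = (\<Sum>i<n. \<Sum>j<n. if i = j then 2 * real n - 1 else 0) + (\<Sum>i<n. \<Sum>j<n. 2 * sqrt (real n))
      + (\<Sum>i<n. \<Sum>j<n. if i = j then 0 else \<bar>W_square n s i j\<bar>)"
    by (simp only: sum.distrib)
  also have "\<dots> = real n * (2 * real n - 1) + 2 * sqrt (real n) * real n ^ 2
      + (\<Sum>i<n. \<Sum>j<n. if i = j then 0 else \<bar>W_square n s i j\<bar>)"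
    by (simp add: power2_eq_square)
  finally show ?thesis .
qed

lemma sum_off_diag_W_square_square_le:
  assumes "s \<in> sign_patterns n"
  shows "(\<Sum>i<n. \<Sum>j<n. if i = j then 0 else (W_square n s i j)\<^sup>2) \<le> real n ^ 3 + cycle_sum n 4 s"
proof -
  let ?C = "\<lambda>i j k l. if i \<noteq> j \<and> k \<noteq> l then W_mat s i k * W_mat s k j * W_mat s j l * W_mat s l i else 0"
  have "(if i = j then 0 else (W_square n s i j)\<^sup>2) \<le> real n + (\<Sum>k<n. \<Sum>l<n. ?C i j k l)"
    if "i < n" "j < n" for i j
  proof (cases "i = j")
    case False
    have "(W_square n s i j)\<^sup>2 = (\<Sum>k<n. \<Sum>l<n. W_mat s i k * W_mat s k j * (W_mat s i l * W_mat s l j))"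
      unfolding W_square_def power2_eq_square by (simp add: sum_product)
    also have "\<dots> = (\<Sum>k<n. \<Sum>l<n. (if k = l then (W_mat s i k * W_mat s k j)\<^sup>2 else 0) + ?C i j k l)"
      using False
      by (intro sum.cong refl) (auto simp: power2_eq_square W_mat_sym[of s l i for l] W_mat_sym[of s j l for l])
    also have "\<dots> = (\<Sum>k<n. (W_mat s i k * W_mat s k j)\<^sup>2) + (\<Sum>k<n. \<Sum>l<n. ?C i j k l)"
      by (simp add: sum.distrib)
    also have "(\<Sum>k<n. (W_mat s i k * W_mat s k j)\<^sup>2) \<le> (\<Sum>k<n. 1)"
      using assms that
      by (intro sum_mono) (simp add: abs_square_le_1 abs_mult mult_le_one abs_W_mat_le_1)
    finally show ?thesis
      using False by simp
  qed simp
  then have "(\<Sum>i<n. \<Sum>j<n. if i = j then 0 else (W_square n s i j)\<^sup>2)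
      \<le> (\<Sum>i<n. \<Sum>j<n. real n + (\<Sum>k<n. \<Sum>l<n. ?C i j k l))"
    by (intro sum_mono) simp
  also have "\<dots> = real n ^ 3 + (\<Sum>i<n. \<Sum>j<n. \<Sum>k<n. \<Sum>l<n. ?C i j k l)"
    by (simp add: sum.distrib power3_eq_cube)
  also have "(\<Sum>i<n. \<Sum>j<n. \<Sum>k<n. \<Sum>l<n. ?C i j k l) = (\<Sum>i<n. \<Sum>k<n. \<Sum>j<n. \<Sum>l<n. ?C i j k l)"
    by (rule sum.cong[OF refl sum.swap])
  also have "\<dots> = cycle_sum n 4 s"
    by (simp only: cycle_sum_4)
  finally show ?thesis .
qed

lemma witness_polynomial_ineq:
  fixes r :: real
  assumes "10 \<le> r"
  shows "r\<^sup>2 * (2 * r\<^sup>2 - 1) + 25 / 8 * r ^ 5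
    \<le> 3 * (- r / 4 * (r\<^sup>2 * (2 * r\<^sup>2 - 1)) + 2 * r * (r\<^sup>2 * (r\<^sup>2 - 1)) - r * (r\<^sup>2)\<^sup>2 / 4)"
proof -
  have "r * r \<ge> 10 * r"
    using assms by (intro mult_right_mono) auto
  then have "0 \<le> 5 / 8 * r\<^sup>2 - 2 * r - 21 / 4"
    using assms unfolding power2_eq_square by linarith
  then have "0 \<le> r ^ 3 * (5 / 8 * r\<^sup>2 - 2 * r - 21 / 4) + r\<^sup>2"
    using assms by simp
  also have "\<dots> = 3 * (- r / 4 * (r\<^sup>2 * (2 * r\<^sup>2 - 1)) + 2 * r * (r\<^sup>2 * (r\<^sup>2 - 1)) - r * (r\<^sup>2)\<^sup>2 / 4)
      - (r\<^sup>2 * (2 * r\<^sup>2 - 1) + 25 / 8 * r ^ 5)"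
    by (simp add: algebra_simps eval_nat_numeral)
  finally show ?thesis
    by simp
qed

lemma entry_norm1_witness_mat_le_3_trace:
  assumes s: "s \<in> sign_patterns n" and n: "100 \<le> n"
    and triangles: "- (sqrt (real n) * real n ^ 2 / 4) \<le> cycle_sum n 3 s"
    and squares: "cycle_sum n 4 s \<le> real n ^ 3 / 4"
  shows "entry_norm1 n (\<lambda>i j. complex_of_real (witness_mat n s i j))
    \<le> 3 * Re (mtrace_prod n (T_mat n s) (\<lambda>i j. complex_of_real (witness_mat n s i j)))"
proof -
  define r where "r = sqrt (real n)"
  have n_eq: "real n = r\<^sup>2"
    by (simp add: r_def)
  have r: "10 \<le> r"
    using real_sqrt_le_mono[of 100 "real n"] n by (simp add: r_def)
  define S where "S = (\<Sum>i<n. \<Sum>j<n. if i = j then 0 else \<bar>W_square n s i j\<bar>)"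
  have "2 * r * S \<le> (\<Sum>i<n. \<Sum>j<n. if i = j then 0 else (W_square n s i j)\<^sup>2) + real n ^ 3"
  proof -
    have "2 * r * \<bar>q\<bar> \<le> q\<^sup>2 + real n" for q
      using sum_squares_bound[of r "\<bar>q\<bar>"] by (simp add: n_eq power2_eq_square mult_ac)
    then have "2 * r * S \<le> (\<Sum>i<n. \<Sum>j<n. (if i = j then 0 else (W_square n s i j)\<^sup>2) + real n)"
      unfolding S_def sum_distrib_left using r by (intro sum_mono) auto
    then show ?thesis
      by (simp add: sum.distrib power3_eq_cube)
  qed
  also have "\<dots> \<le> 9 / 4 * real n ^ 3"
    using sum_off_diag_W_square_square_le[OF s] squares by simp
  finally have "S \<le> 9 / 8 * r ^ 5"
    using r by (simp add: n_eq field_simps eval_nat_numeral)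
  then have "entry_norm1 n (\<lambda>i j. complex_of_real (witness_mat n s i j))
      \<le> r\<^sup>2 * (2 * r\<^sup>2 - 1) + 25 / 8 * r ^ 5"
    using entry_norm1_witness_mat_le[OF s] r unfolding S_def[symmetric]
    by (simp add: n_eq r_def[symmetric] eval_nat_numeral)
  also have "- r / 4 * (r\<^sup>2 * (2 * r\<^sup>2 - 1)) + 2 * r * (r\<^sup>2 * (r\<^sup>2 - 1)) - r * (r\<^sup>2)\<^sup>2 / 4
      \<le> Re (mtrace_prod n (T_mat n s) (\<lambda>i j. complex_of_real (witness_mat n s i j)))"
    using trace_T_mat_witness_mat[OF s] triangles unfolding r_def[symmetric]
    unfolding n_eq by simp
  from order_trans[OF witness_polynomial_ineq[OF r] mult_left_mono[OF this]]
  have "r\<^sup>2 * (2 * r\<^sup>2 - 1) + 25 / 8 * r ^ 5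
      \<le> 3 * Re (mtrace_prod n (T_mat n s) (\<lambda>i j. complex_of_real (witness_mat n s i j)))"
    by simp
  finally show ?thesis .
qed

lemma entry_norm1_witness_mat_pos:
  assumes "s \<in> sign_patterns n" "0 < n"
  shows "0 < entry_norm1 n (\<lambda>i j. complex_of_real (witness_mat n s i j))"
proof -
  have "\<bar>witness_mat n s 0 0\<bar> \<le> entry_norm1 n (\<lambda>i j. complex_of_real (witness_mat n s i j))"
    unfolding entry_norm1_def norm_of_real using assms(2)
    by (intro order_trans[OF member_le_sum member_le_sum[of 0 _ "\<lambda>i. \<Sum>j<n. \<bar>witness_mat n s i j\<bar>"]])
      (auto intro: sum_nonneg)
  moreover have "witness_mat n s 0 0 = 2 * real n - 1"
    using assms by (simp add: witness_mat_diag)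
  ultimately show ?thesis
    using assms(2) by simp
qed

lemma one_third_le_pi_plus_T_mat:
  assumes "s \<in> sign_patterns n" "100 \<le> n"
    and "- (sqrt (real n) * real n ^ 2 / 4) \<le> cycle_sum n 3 s"
    and "cycle_sum n 4 s \<le> real n ^ 3 / 4"
  shows "1 / 3 \<le> pi_plus n (T_mat n s)"
proof -
  let ?A = "\<lambda>i j. complex_of_real (witness_mat n s i j)"
  have pos: "0 < entry_norm1 n ?A"
    using assms(1,2) by (intro entry_norm1_witness_mat_pos) auto
  then have "1 / 3 \<le> Re (mtrace_prod n (T_mat n s) ?A) / entry_norm1 n ?A"
    using entry_norm1_witness_mat_le_3_trace[OF assms] by (simp add: field_simps)
  also have "\<dots> \<le> pi_plus n (T_mat n s)"
    by (rule pi_plus_ge_normalized_witness[OF psd_witness_mat pos])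
  finally show ?thesis .
qed

lemma card_large_triangle_sum_le:
  assumes "0 < n"
  shows "real (card {s \<in> sign_patterns n. sqrt (real n) * real n ^ 2 / 4 \<le> \<bar>cycle_sum n 3 s\<bar>})
    \<le> 432 / real n ^ 2 * real (card (sign_patterns n))"
proof -
  have "(sqrt (real n) * real n ^ 2 / 4)\<^sup>2 = real n ^ 5 / 16"
    by (simp add: power_mult_distrib power_divide eval_nat_numeral)
  then have "real 3 ^ 3 * real n ^ 3 / (sqrt (real n) * real n ^ 2 / 4)\<^sup>2 = 432 / real n ^ 2"
    using assms by (simp only:) (simp add: field_simps eval_nat_numeral)
  then show ?thesis
    using card_abs_cycle_sum_ge_le[of 3 "sqrt (real n) * real n ^ 2 / 4" n] assms by simp
qed

lemma card_large_square_sum_le: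
  assumes "0 < n"
  shows "real (card {s \<in> sign_patterns n. real n ^ 3 / 4 \<le> \<bar>cycle_sum n 4 s\<bar>})
    \<le> 4096 / real n ^ 2 * real (card (sign_patterns n))"
proof -
  have "real 4 ^ 4 * real n ^ 4 / (real n ^ 3 / 4)\<^sup>2 = 4096 / real n ^ 2"
    using assms by (simp add: field_simps eval_nat_numeral)
  then show ?thesis
    using card_abs_cycle_sum_ge_le[of 4 "real n ^ 3 / 4" n] assms by simp
qed

lemma fraction_pi_plus_ge_one_third_ge:
  assumes n: "100 \<le> n"
  shows "1 - 4528 / real n ^ 2
    \<le> real (card {s \<in> sign_patterns n. 1 / 3 \<le> pi_plus n (T_mat n s)}) / real (card (sign_patterns n))"
proof -
  let ?S = "sign_patterns n"
  define B3 where "B3 = {s \<in> ?S. sqrt (real n) * real n ^ 2 / 4 \<le> \<bar>cycle_sum n 3 s\<bar>}"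
  define B4 where "B4 = {s \<in> ?S. real n ^ 3 / 4 \<le> \<bar>cycle_sum n 4 s\<bar>}"
  define G where "G = {s \<in> ?S. 1 / 3 \<le> pi_plus n (T_mat n s)}"
  have "?S - (B3 \<union> B4) \<subseteq> G"
  proof
    fix s assume "s \<in> ?S - (B3 \<union> B4)"
    then have s: "s \<in> ?S" and "\<bar>cycle_sum n 3 s\<bar> < sqrt (real n) * real n ^ 2 / 4"
      "\<bar>cycle_sum n 4 s\<bar> < real n ^ 3 / 4"
      by (auto simp: B3_def B4_def)
    then show "s \<in> G"
      unfolding G_def using one_third_le_pi_plus_T_mat[OF s n] s by simp
  qed
  then have "card (?S - (B3 \<union> B4)) \<le> card G"
    by (intro card_mono) (simp_all add: G_def finite_sign_patterns)
  moreover have "card ?S - card (B3 \<union> B4) \<le> card (?S - (B3 \<union> B4))"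
    by (rule diff_card_le_card_Diff) (simp add: B3_def B4_def finite_sign_patterns)
  moreover note card_Un_le[of B3 B4]
  ultimately have "real (card ?S) \<le> real (card G) + real (card B3) + real (card B4)"
    by linarith
  then have "(1 - 4528 / real n ^ 2) * real (card ?S) \<le> real (card G)"
    using card_large_triangle_sum_le[of n] card_large_square_sum_le[of n] n
    unfolding B3_def B4_def by (simp add: algebra_simps)
  then show ?thesis
    using card_sign_patterns_pos[of n] unfolding G_def by (simp add: field_simps)
qed

lemma fraction_pi_plus_ge_one_third_le_1:
  "real (card {s \<in> sign_patterns n. 1 / 3 \<le> pi_plus n (T_mat n s)}) / real (card (sign_patterns n)) \<le> 1"
  using card_mono[OF finite_sign_patterns, of "{s \<in> sign_patterns n. 1 / 3 \<le> pi_plus n (T_mat n s)}"]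
    card_sign_patterns_pos
  by (simp add: divide_le_eq_1)

theorem lemma1:
  shows "(\<lambda>n. real (card {s \<in> sign_patterns n. pi_plus n (T_mat n s) \<ge> 1/3})
              / real (card (sign_patterns n))) \<longlonglongrightarrow> 1"
proof (rule tendsto_sandwich[OF _ _ _ tendsto_const])
  show "\<forall>\<^sub>F n in sequentially. 1 - 4528 / real n ^ 2
      \<le> real (card {s \<in> sign_patterns n. 1 / 3 \<le> pi_plus n (T_mat n s)}) / real (card (sign_patterns n))"
    by (rule eventually_sequentiallyI[of 100]) (rule fraction_pi_plus_ge_one_third_ge, simp)
  show "\<forall>\<^sub>F n in sequentially.
      real (card {s \<in> sign_patterns n. 1 / 3 \<le> pi_plus n (T_mat n s)}) / real (card (sign_patterns n)) \<le> 1"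
    by (intro always_eventually allI fraction_pi_plus_ge_one_third_le_1)
  have "(\<lambda>n. 4528 / real n ^ 2) \<longlonglongrightarrow> 0"
    by (intro tendsto_divide_0[OF tendsto_const] filterlim_at_top_imp_at_infinity
        filterlim_pow_at_top filterlim_real_sequentially) simp
  then show "(\<lambda>n. 1 - 4528 / real n ^ 2) \<longlonglongrightarrow> 1"
    using tendsto_diff[OF tendsto_const, of _ 0 sequentially 1] by simp
qed

end
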